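(* Let $\mathcal C$ be a binary linear code presented by an $m\times n$ parity-check matrix $H$, let $\mathbf c\in\mathcal C$ be a codeword, let $\boldsymbol\omega$ be a linear programming pseudocodeword, and let $\Psi=\{\boldsymbol\psi_1,\dots,\boldsymbol\psi_r\}$ be a set of linear programming pseudocodewords, with $\Psi^{\mathbf c}=\{\boldsymbol\psi_1^{\mathbf c},\dots,\boldsymbol\psi_r^{\mathbf c}\}$. Let $\phi_{\mathbf c}:\mathbb R^n\to\mathbb R^n$ be defined by $x_i\mapsto(-1)^{c_i}x_i$ for all $i=1,\dots,n$. Then $\phi_{\mathbf c}$ is an isometry from the recovery cone $\mathcal K_{\boldsymbol\omega}$ onto $\mathcal K_{\boldsymbol\omega^{\mathbf c}}$, and an isometry from the approximation cone $\mathcal R_{\boldsymbol\omega,\Psi}$ onto $\mathcal R_{\boldsymbol\omega^{\mathbf c},\Psi^{\mathbf c}}$.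
   Context: For a row $\mathbf h_j$ of $H=(h_{j,i})$ let $N(\mathbf h_j)=\{i : h_{j,i}=1\}$. The fundamental polytope $\mathcal P(H)$ is written as $\{\mathbf x: A\mathbf x\ge\mathbf b\}$ with the following constraints (rows of $A$ with right-hand sides): $x_i\ge 0$ and $-x_i\ge -1$ for each $i=1,\dots,n$; and for every row index $j$ and every odd-sized $S\subseteq N(\mathbf h_j)$, $-\sum_{i\in S}x_i+\sum_{i'\in N(\mathbf h_j)\setminus S}x_{i'}\ge 1-|S|$. A linear programming (LP) pseudocodeword is an extreme point of $\mathcal P(H)$. For $\mathbf c\in\mathcal C$ and $\mathbf x\in\mathcal P(H)$, the relative point $\mathbf x^{\mathbf c}$ has $i$th coordinate $|x_i-c_i|$; if $\boldsymbol\omega$ is an LP pseudocodeword, so is $\boldsymbol\omega^{\mathbf c}$. The recovery cone $\mathcal K_{\boldsymbol\omega}$ is the set of conic (nonnegative) combinations of the rows of $A$ whose constraints are active (hold with equality) at $\boldsymbol\omega$. The approximation cone $\mathcal R_{\boldsymbol\omega,\Psi}$ is $\{\mathbf x\in\mathbb R^n : (\boldsymbol\psi_i-\boldsymbol\omega)^T\mathbf x\ge 0 \text{ for } i=1,\dots,r\}$. *)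

theory Defs
  imports "HOL-Analysis.Analysis"
begin

text \<open>A binary parity-check matrix with row index type 'm and column index type 'n
  is a function H :: 'm \<Rightarrow> 'n \<Rightarrow> bool (True = entry 1). Binary vectors are
  'n \<Rightarrow> bool (True = 1).\<close>

definition nbhd :: "('m \<Rightarrow> 'n \<Rightarrow> bool) \<Rightarrow> 'm \<Rightarrow> 'n set" where
  "nbhd H j = {i. H j i}"

definition is_codeword :: "('m::finite \<Rightarrow> 'n::finite \<Rightarrow> bool) \<Rightarrow> ('n \<Rightarrow> bool) \<Rightarrow> bool" where
  "is_codeword H c \<longleftrightarrow> (\<forall>j. even (card {i. H j i \<and> c i}))"

definition bit :: "bool \<Rightarrow> real" where
  "bit b = (if b then 1 else 0)"

text \<open>The rows of A together with their right-hand sides, as pairs (row, rhs).\<close>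
definition constraints :: "('m::finite \<Rightarrow> 'n::finite \<Rightarrow> bool) \<Rightarrow> ((real^'n) \<times> real) set" where
  "constraints H =
     {(axis i 1, 0) | i. True}
   \<union> {(axis i (-1), -1) | i. True}
   \<union> {((\<chi> i. if i \<in> S then -1 else if i \<in> nbhd H j then 1 else 0), 1 - real (card S))
        | j S. S \<subseteq> nbhd H j \<and> odd (card S)}"

definition fund_polytope :: "('m::finite \<Rightarrow> 'n::finite \<Rightarrow> bool) \<Rightarrow> (real^'n) set" where
  "fund_polytope H = {x. \<forall>(a, b) \<in> constraints H. a \<bullet> x \<ge> b}"

definition LP_pseudocodeword :: "('m::finite \<Rightarrow> 'n::finite \<Rightarrow> bool) \<Rightarrow> real^'n \<Rightarrow> bool" where
  "LP_pseudocodeword H w \<longleftrightarrow> w extreme_point_of (fund_polytope H)"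

definition relative_point :: "('n::finite \<Rightarrow> bool) \<Rightarrow> real^'n \<Rightarrow> real^'n" where
  "relative_point c x = (\<chi> i. \<bar>x $ i - bit (c i)\<bar>)"

definition active_rows :: "('m::finite \<Rightarrow> 'n::finite \<Rightarrow> bool) \<Rightarrow> real^'n \<Rightarrow> (real^'n) set" where
  "active_rows H w = {a. \<exists>b. (a, b) \<in> constraints H \<and> a \<bullet> w = b}"

definition recovery_cone :: "('m::finite \<Rightarrow> 'n::finite \<Rightarrow> bool) \<Rightarrow> real^'n \<Rightarrow> (real^'n) set" where
  "recovery_cone H w =
     {y. \<exists>F l. finite F \<and> F \<subseteq> active_rows H w \<and> (\<forall>a\<in>F. l a \<ge> 0) \<and> y = (\<Sum>a\<in>F. l a *\<^sub>R a)}"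

definition approx_cone :: "real^'n \<Rightarrow> (nat \<Rightarrow> real^'n) \<Rightarrow> nat \<Rightarrow> (real^'n) set" where
  "approx_cone w psi r = {x. \<forall>i\<in>{1..r}. (psi i - w) \<bullet> x \<ge> 0}"

definition phi :: "('n::finite \<Rightarrow> bool) \<Rightarrow> real^'n \<Rightarrow> real^'n" where
  "phi c x = (\<chi> i. (-1) ^ (if c i then 1 else 0) * x $ i)"

definition isometry_onto :: "('a::metric_space \<Rightarrow> 'b::metric_space) \<Rightarrow> 'a set \<Rightarrow> 'b set \<Rightarrow> bool" where
  "isometry_onto f A B \<longleftrightarrow> f ` A = B \<and> (\<forall>x\<in>A. \<forall>y\<in>A. dist (f x) (f y) = dist x y)"

end

(*
  The map phi c negates the coordinates in the support C of c, and on the unit cube, which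
  contains the fundamental polytope, x^c_i is 1 - x_i for i in C and x_i otherwise; hence
  x^c - y^c = phi c (x - y).  Every row of A is a signed indicator: -1 on a set S and +1 on
  N - S, where N is a singleton (box constraints) or a check neighbourhood with S odd.
  phi c turns the row (N, S) into the row (N, S xor (N \<inter> C)), whose slack at x^c equals
  the slack of the original row at x; the new S is still odd because c satisfies every check.
  So phi c maps the active rows at w to those at w^c, and hence the recovery cones into each
  other; it maps the approximation cones into each other because it preserves inner products.
  As an orthogonal involution, phi c is then an isometry onto.
*)
theory Submission
  imports Defs
begin

lemma phi_nth [simp]: "phi c x $ i = (if c i then - x $ i else x $ i)"
  by (simp add: phi_def)

lemma phi_phi [simp]: "phi c (phi c x) = x"
  by (simp add: vec_eq_iff)

lemma inj_phi: "inj (phi c)"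
  by (metis injI phi_phi)

lemma linear_phi: "linear (phi c)"
  by (rule linearI) (auto simp: vec_eq_iff)

lemma inner_phi_phi: "phi c x \<bullet> phi c y = x \<bullet> y"
  unfolding inner_vec_def by (rule sum.cong) auto

lemma dist_phi_phi: "dist (phi c x) (phi c y) = dist x y"
proof -
  have "phi c x - phi c y = phi c (x - y)"
    by (simp add: vec_eq_iff)
  then show ?thesis
    by (simp add: dist_norm norm_eq_sqrt_inner inner_phi_phi)
qed

lemma isometry_onto_involution:
  assumes "\<And>x. f (f x) = x" "\<And>x y. dist (f x) (f y) = dist x y"
    and "f ` A \<subseteq> B" "f ` B \<subseteq> A"
  shows "isometry_onto f A B"
  unfolding isometry_onto_def
proof (intro conjI ballI equalityI subsetI)
  fix y assume "y \<in> B"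
  then have "f y \<in> A" and "y = f (f y)"
    using assms(1,4) by auto
  then show "y \<in> f ` A"
    by blast
qed (use assms(2,3) in auto)

lemma fund_polytope_subset_cube: "fund_polytope H \<subseteq> cbox 0 1"
proof
  fix x assume x: "x \<in> fund_polytope H"
  have "axis i 1 \<bullet> x \<ge> 0" "axis i (-1) \<bullet> x \<ge> -1" for i
    using x unfolding fund_polytope_def constraints_def by fastforce+
  then show "x \<in> cbox 0 1"
    by (auto simp: mem_box_cart inner_axis')
qed

lemma LP_pseudocodeword_in_cube: "LP_pseudocodeword H w \<Longrightarrow> w \<in> cbox 0 1"
  using fund_polytope_subset_cube
  unfolding LP_pseudocodeword_def extreme_point_of_def by blast

lemma relative_point_nth:
  "x \<in> cbox 0 1 \<Longrightarrow> relative_point c x $ i = (if c i then 1 - x $ i else x $ i)"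
  by (auto simp: relative_point_def mem_box_cart bit_def)

lemma relative_point_in_cube: "x \<in> cbox 0 1 \<Longrightarrow> relative_point c x \<in> cbox 0 1"
  by (auto simp: mem_box_cart relative_point_nth)

lemma relative_point_relative_point:
  "x \<in> cbox 0 1 \<Longrightarrow> relative_point c (relative_point c x) = x"
  by (simp add: vec_eq_iff relative_point_nth relative_point_in_cube)

lemma relative_point_diff:
  "x \<in> cbox 0 1 \<Longrightarrow> y \<in> cbox 0 1 \<Longrightarrow>
    relative_point c x - relative_point c y = phi c (x - y)"
  by (simp add: vec_eq_iff relative_point_nth)

lemma phi_in_approx_cone_iff:
  assumes "w \<in> cbox 0 1" "\<forall>i\<in>{1..r}. psi i \<in> cbox 0 1"
  shows "phi c x \<in> approx_cone (relative_point c w) (\<lambda>i. relative_point c (psi i)) r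
    \<longleftrightarrow> x \<in> approx_cone w psi r"
  using assms by (simp add: approx_cone_def relative_point_diff inner_phi_phi)

lemma card_sym_diff:
  assumes "finite A" "finite B"
  shows "card (sym_diff A B) + 2 * card (A \<inter> B) = card A + card B"
proof -
  have "card (sym_diff A B) = card (A - B) + card (B - A)"
    using assms by (intro card_Un_disjoint) auto
  moreover have "card A = card (A - B) + card (A \<inter> B)"
    and "card B = card (B - A) + card (A \<inter> B)"
    using assms by (metis card_Int_Diff inf_commute add.commute)+
  ultimately show ?thesis
    by simp
qed

lemma odd_card_sym_diff:
  assumes "finite A" "finite B" "odd (card A)" "even (card B)"
  shows "odd (card (sym_diff A B))"
  using card_sym_diff[OF assms(1,2)] assms(3,4) by presburger

definition signed_indicator :: "'n set \<Rightarrow> 'n set \<Rightarrow> real^'n::finite" where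
  "signed_indicator N S = (\<chi> i. if i \<in> S then -1 else if i \<in> N then 1 else 0)"

lemma axis_signed_indicator:
  "axis i 1 = signed_indicator {i} {}" "axis i (-1) = signed_indicator {i} {i}"
  by (auto simp: vec_eq_iff axis_def signed_indicator_def)

lemma box_constraints_signed_indicator:
  "{(axis i 1, 0 :: real) | i. True} \<union> {(axis i (-1), -1) | i. True} =
     {(signed_indicator {i} S, - real (card S)) | i S. S \<subseteq> {i}}"
  by (auto simp: axis_signed_indicator subset_singleton_iff)
    (metis card_1_singleton_iff subset_singleton_iff)

lemma constraints_signed_indicator:
  "constraints H =
     {(signed_indicator {i} S, - real (card S)) | i S. S \<subseteq> {i}}
   \<union> {(signed_indicator (nbhd H j) S, 1 - real (card S))
        | j S. S \<subseteq> nbhd H j \<and> odd (card S)}"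
  unfolding constraints_def signed_indicator_def[symmetric]
    box_constraints_signed_indicator[symmetric]
  by blast

lemma phi_signed_indicator:
  "S \<subseteq> N \<Longrightarrow>
    phi c (signed_indicator N S) = signed_indicator N (sym_diff S (N \<inter> {i. c i}))"
  by (auto simp: vec_eq_iff signed_indicator_def)

lemma inner_signed_indicator:
  assumes "S \<subseteq> N"
  shows "signed_indicator N S \<bullet> x + real (card S)
    = (\<Sum>i\<in>N. if i \<in> S then 1 - x $ i else x $ i)"
proof -
  have "signed_indicator N S \<bullet> x = (\<Sum>i\<in>N. if i \<in> S then - x $ i else x $ i)"
    unfolding inner_vec_def signed_indicator_def
    using assms by (intro sum.mono_neutral_cong_right) auto
  moreover have "real (card S) = (\<Sum>i\<in>N. if i \<in> S then 1 else 0)"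
    using assms by (simp add: sum.If_cases Int_absorb1)
  ultimately show ?thesis
    by (auto simp: sum.distrib[symmetric] intro!: sum.cong)
qed

lemma inner_phi_signed_indicator_relative_point:
  assumes "S \<subseteq> N" "x \<in> cbox 0 1"
  shows "phi c (signed_indicator N S) \<bullet> relative_point c x
      + real (card (sym_diff S (N \<inter> {i. c i})))
    = signed_indicator N S \<bullet> x + real (card S)"
proof -
  have flipped_subset: "sym_diff S (N \<inter> {i. c i}) \<subseteq> N"
    using assms(1) by blast
  then show ?thesis
    unfolding phi_signed_indicator[OF assms(1)] inner_signed_indicator[OF assms(1)]
      inner_signed_indicator[OF flipped_subset]
    using assms by (intro sum.cong) (auto simp: relative_point_nth)
qed

lemma phi_constraint:
  assumes "is_codeword H c" "(a, b) \<in> constraints H" "x \<in> cbox 0 1"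
  shows "\<exists>b'. (phi c a, b') \<in> constraints H
    \<and> phi c a \<bullet> relative_point c x - b' = a \<bullet> x - b"
proof -
  consider (box) i S where "a = signed_indicator {i} S" "b = - real (card S)" "S \<subseteq> {i}"
    | (check) j S where "a = signed_indicator (nbhd H j) S" "b = 1 - real (card S)"
      "S \<subseteq> nbhd H j" "odd (card S)"
    using assms(2) unfolding constraints_signed_indicator by blast
  then show ?thesis
  proof cases
    case (box i S)
    define S' where "S' = sym_diff S ({i} \<inter> {i. c i})"
    have "S' \<subseteq> {i}"
      using box(3) by (auto simp: S'_def)
    then have "(phi c a, - real (card S')) \<in> constraints H"
      using box(1,3) by (auto simp: constraints_signed_indicator phi_signed_indicator S'_def)
    moreover have "phi c a \<bullet> relative_point c x + real (card S') = a \<bullet> x - b"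
      using inner_phi_signed_indicator_relative_point[OF box(3) assms(3)] box(1,2)
      by (simp add: S'_def)
    ultimately show ?thesis
      by force
  next
    case (check j S)
    define S' where "S' = sym_diff S (nbhd H j \<inter> {i. c i})"
    have "even (card (nbhd H j \<inter> {i. c i}))"
      using assms(1) by (simp add: is_codeword_def nbhd_def Collect_conj_eq[symmetric])
    then have "odd (card S')"
      unfolding S'_def using check(4) by (intro odd_card_sym_diff) auto
    moreover have "S' \<subseteq> nbhd H j"
      using check(3) by (auto simp: S'_def)
    ultimately have "(phi c a, 1 - real (card S')) \<in> constraints H"
      using check(1,3) by (auto simp: constraints_signed_indicator phi_signed_indicator S'_def)
    moreover have "phi c a \<bullet> relative_point c x + real (card S') = a \<bullet> x - b + 1"
      using inner_phi_signed_indicator_relative_point[OF check(3) assms(3)] check(1,2)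
      by (simp add: S'_def)
    ultimately show ?thesis
      by force
  qed
qed

lemma phi_active_rows:
  assumes "is_codeword H c" "w \<in> cbox 0 1"
  shows "phi c ` active_rows H w \<subseteq> active_rows H (relative_point c w)"
  unfolding active_rows_def using phi_constraint[OF assms(1) _ assms(2)] by fastforce

lemma recovery_cone_linear_image:
  assumes "linear f" "inj f" "f ` active_rows H w \<subseteq> active_rows H w'"
  shows "f ` recovery_cone H w \<subseteq> recovery_cone H w'"
proof
  fix z assume "z \<in> f ` recovery_cone H w"
  then obtain F l where F: "finite F" "F \<subseteq> active_rows H w" "\<forall>a\<in>F. l a \<ge> 0"
    and z: "z = f (\<Sum>a\<in>F. l a *\<^sub>R a)"
    unfolding recovery_cone_def by blast
  have "z = (\<Sum>a\<in>F. l a *\<^sub>R f a)"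
    using z assms(1) by (simp add: linear_sum linear_scale)
  also have "\<dots> = (\<Sum>b\<in>f ` F. (l \<circ> inv f) b *\<^sub>R b)"
    using assms(2) by (simp add: sum.reindex inj_on_subset)
  finally show "z \<in> recovery_cone H w'"
    using F assms(2,3) unfolding recovery_cone_def
    by (intro CollectI exI[of _ "f ` F"] exI[of _ "l \<circ> inv f"]) auto
qed

lemma phi_recovery_cone:
  assumes "is_codeword H c" "w \<in> cbox 0 1"
  shows "phi c ` recovery_cone H w \<subseteq> recovery_cone H (relative_point c w)"
  using assms by (intro recovery_cone_linear_image linear_phi inj_phi phi_active_rows)

theorem proposition5:
  fixes H :: "'m::finite \<Rightarrow> 'n::finite \<Rightarrow> bool"
    and c :: "'n \<Rightarrow> bool"
    and w :: "real^'n"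
    and psi :: "nat \<Rightarrow> real^'n"
    and r :: nat
  assumes "is_codeword H c"
    and "LP_pseudocodeword H w"
    and "\<forall>i\<in>{1..r}. LP_pseudocodeword H (psi i)"
  shows "isometry_onto (phi c) (recovery_cone H w) (recovery_cone H (relative_point c w))
       \<and> isometry_onto (phi c) (approx_cone w psi r)
           (approx_cone (relative_point c w) (\<lambda>i. relative_point c (psi i)) r)"
proof
  have w: "w \<in> cbox 0 1" and psi: "\<forall>i\<in>{1..r}. psi i \<in> cbox 0 1"
    using assms(2,3) LP_pseudocodeword_in_cube by blast+
  have "phi c ` recovery_cone H (relative_point c w) \<subseteq> recovery_cone H w"
    using phi_recovery_cone[OF assms(1) relative_point_in_cube[OF w, of c]]
    by (simp add: relative_point_relative_point[OF w])
  then show "isometry_onto (phi c) (recovery_cone H w) (recovery_cone H (relative_point c w))"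
    by (intro isometry_onto_involution phi_phi dist_phi_phi phi_recovery_cone assms(1) w)
  let ?A = "approx_cone w psi r"
    and ?B = "approx_cone (relative_point c w) (\<lambda>i. relative_point c (psi i)) r"
  have approx_iff: "phi c x \<in> ?B \<longleftrightarrow> x \<in> ?A" for x
    using phi_in_approx_cone_iff[OF w psi] .
  then have "phi c ` ?A \<subseteq> ?B" "phi c ` ?B \<subseteq> ?A"
    by (auto simp flip: approx_iff[of "phi c _"])
  then show "isometry_onto (phi c) ?A ?B"
    by (intro isometry_onto_involution phi_phi dist_phi_phi)
qed

end
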